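(* Let $f:[0,1]\to[0,1]$ be a surjective continuous function that does not admit a splitting sequence. Then either (a) $f$ admits at least two fixed points, and if $d$ is the maximum and $e$ the minimum fixed point of $f$, then $(d,d,d,\dots)$ and $(e,e,e,\dots)$ are endpoints of $\varprojlim f$; or (b) $f$ admits a 2-cycle, and if $\{s,t\}$ is a 2-cycle such that for any other 2-cycle $\{u,v\}$ we have $s<u$, then $(s,t,s,t,\dots)$ and $(t,s,t,s,\dots)$ are endpoints of $\varprojlim f$.
   Context: For a continuous $f:[0,1]\to[0,1]$, $\varprojlim f=\{\mathbf x=(x_0,x_1,\dots)\in[0,1]^{\mathbb N}: f(x_{n+1})=x_n\ \forall n\}$ with the product topology; it is a continuum. A point $p$ of a continuum $X$ is an endpoint of $X$ if for any two subcontinua $A,B$ of $X$ containing $p$, either $A\subseteq B$ or $B\subseteq A$. A 2-cycle is a set $\{s,t\}$ with $s\neq t$, $f(s)=t$, $f(t)=s$. A sequence $(T_n)_{n\in\mathbb N}$ of closed intervals $T_n\subsetneq[0,1]$ (possibly degenerate) is tight if $f(T_{n+1})=T_n$ for every $n$ and $T_n$ is nondegenerate for all sufficiently large $n$. A tight sequence $(T_n)$, $T_n=[l_n,r_n]$, is a splitting sequence admitted by $f$ if there are an infinite $N\subseteq\mathbb N$ and nondegenerate closed intervals $S_n\subseteq[0,1]$ ($n\in N$) with $S_n\cap T_n\subseteq\{l_n,r_n\}$ and $f(S_n)=f(T_n)$ for all $n\in N$. *)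

theory Defs
  imports "HOL-Analysis.Analysis"
begin

text \<open>Sequences in [0,1]^N are functions nat => real; the topology on nat => real
 is the product topology (instance from HOL-Analysis Function_Topology).\<close>

definition inv_lim :: "(real \<Rightarrow> real) \<Rightarrow> (nat \<Rightarrow> real) set" where
  "inv_lim f = {x. (\<forall>n. x n \<in> {0..1}) \<and> (\<forall>n. f (x (Suc n)) = x n)}"

definition subcontinuum :: "'a::topological_space set \<Rightarrow> 'a set \<Rightarrow> bool" where
  "subcontinuum A X \<longleftrightarrow> A \<subseteq> X \<and> A \<noteq> {} \<and> compact A \<and> connected A"

definition endpoint :: "'a::topological_space set \<Rightarrow> 'a \<Rightarrow> bool" where
  "endpoint X p \<longleftrightarrow> p \<in> X \<and>
     (\<forall>A B. subcontinuum A X \<longrightarrow> subcontinuum B X \<longrightarrow> p \<in> A \<longrightarrow> p \<in> B \<longrightarrow>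
        A \<subseteq> B \<or> B \<subseteq> A)"

definition two_cycle :: "(real \<Rightarrow> real) \<Rightarrow> real \<Rightarrow> real \<Rightarrow> bool" where
  "two_cycle f s t \<longleftrightarrow> s \<in> {0..1} \<and> t \<in> {0..1} \<and> s \<noteq> t \<and> f s = t \<and> f t = s"

definition tight :: "(real \<Rightarrow> real) \<Rightarrow> (nat \<Rightarrow> real) \<Rightarrow> (nat \<Rightarrow> real) \<Rightarrow> bool" where
  "tight f l r \<longleftrightarrow>
     (\<forall>n. 0 \<le> l n \<and> l n \<le> r n \<and> r n \<le> 1 \<and> {l n..r n} \<noteq> {0..1}) \<and>
     (\<forall>n. f ` {l (Suc n)..r (Suc n)} = {l n..r n}) \<and>
     (\<exists>m. \<forall>n\<ge>m. l n < r n)"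

definition splitting_seq :: "(real \<Rightarrow> real) \<Rightarrow> (nat \<Rightarrow> real) \<Rightarrow> (nat \<Rightarrow> real) \<Rightarrow> bool" where
  "splitting_seq f l r \<longleftrightarrow> tight f l r \<and>
     (\<exists>N :: nat set. \<exists>a b :: nat \<Rightarrow> real. infinite N \<and>
        (\<forall>n\<in>N. 0 \<le> a n \<and> a n < b n \<and> b n \<le> 1 \<and>
           {a n..b n} \<inter> {l n..r n} \<subseteq> {l n, r n} \<and>
           f ` {a n..b n} = f ` {l n..r n}))"

definition admits_splitting :: "(real \<Rightarrow> real) \<Rightarrow> bool" where
  "admits_splitting f \<longleftrightarrow> (\<exists>l r. splitting_seq f l r)"

end

theory Submission
  imports Defs
begin

(*
  A subcontinuum A of the inverse limit is determined by its coordinate projections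
  proj A n, which are closed intervals with f (proj A (n + 1)) = proj A n, and A is contained
  in B as soon as proj A n is contained in proj B n for infinitely many n.  Two subintervals
  of [0, 1] containing the same point 0 or 1 are nested, so q is an endpoint once every
  nondegenerate subcontinuum through q contains a fixed c in {0, 1} in its projections along
  a fixed infinite set of coordinates.

  Without splitting sequences, the projections of a nondegenerate subcontinuum eventually
  admit no interval outside them that f maps onto [0, 1]: such intervals, shrunk to have the
  same image as the projections, would form a splitting sequence.  Hence if f maps [0, w]
  onto [0, 1], f w is 0 or 1 and q (n + 1) >= w, then proj A (n + 1) reaches down to w and
  proj A n contains f w (symmetrically for [w, 1]).  For the extreme fixed points and for the
  orbits of the least 2-cycle, w is the larger or the smaller of a preimage of 0 and a
  preimage of 1.  The intermediate value theorem places these preimages on the correct side,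
  since otherwise f has a horseshoe, which also yields a splitting sequence, or a 2-periodic
  point below the least 2-cycle.
*)

definition proj :: "(nat \<Rightarrow> real) set \<Rightarrow> nat \<Rightarrow> real set" where
  "proj A n = (\<lambda>x. x n) ` A"

lemma tendsto_fun_iff_pointwise:
  fixes g :: "'a \<Rightarrow> 'b \<Rightarrow> 'c::topological_space"
  shows "(g \<longlongrightarrow> x) F \<longleftrightarrow> (\<forall>i. ((\<lambda>n. g n i) \<longlongrightarrow> x i) F)"
  using limitin_componentwise[of "\<lambda>i. euclidean" UNIV g x F]
  by (simp add: euclidean_product_topology)

lemma inv_lim_eq_below:
  assumes x: "x \<in> inv_lim f" and y: "y \<in> inv_lim f" and "x n = y n" "i \<le> n"
  shows "x i = y i"
  using \<open>i \<le> n\<close>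
proof (induction rule: inc_induct)
  case base
  show ?case by (fact \<open>x n = y n\<close>)
next
  case (step k)
  have "f (x (Suc k)) = x k" "f (y (Suc k)) = y k"
    using x y by (simp_all add: inv_lim_def)
  then show ?case using step.IH by simp
qed

lemma image_proj_Suc:
  assumes "A \<subseteq> inv_lim f"
  shows "f ` proj A (Suc n) = proj A n"
  unfolding proj_def image_image
  by (rule image_cong) (use assms in \<open>auto simp: inv_lim_def\<close>)

lemma proj_subset_below:
  assumes "A \<subseteq> inv_lim f" "B \<subseteq> inv_lim f" "proj A n \<subseteq> proj B n" "i \<le> n"
  shows "proj A i \<subseteq> proj B i"
  using \<open>i \<le> n\<close> \<open>proj A n \<subseteq> proj B n\<close>
proof (induction rule: inc_induct)
  case (step k)
  then show ?case using image_mono image_proj_Suc assms(1,2) by metis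
qed

lemma mem_if_coords_in_proj:
  assumes B: "B \<subseteq> inv_lim f" "closed B" and x: "x \<in> inv_lim f"
    and coords: "\<And>n. x n \<in> proj B n"
  shows "x \<in> B"
proof -
  have "\<forall>n. \<exists>z. z \<in> B \<and> z n = x n"
    using coords unfolding proj_def by (metis imageE)
  then obtain y where y: "\<And>n. y n \<in> B" "\<And>n. y n n = x n"
    by (metis (full_types) choice)
  have "y \<longlonglongrightarrow> x"
    unfolding tendsto_fun_iff_pointwise
  proof
    fix i
    have "\<forall>n\<ge>i. y n i = x i"
      using inv_lim_eq_below[OF _ x] y B(1) by blast
    then show "(\<lambda>n. y n i) \<longlonglongrightarrow> x i"
      by (intro tendsto_eventually) (auto simp: eventually_sequentially)
  qed
  then show ?thesis using closed_sequentially[OF B(2)] y(1) by blast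
qed

lemma subset_if_frequently_proj_subset:
  assumes A: "A \<subseteq> inv_lim f" and B: "B \<subseteq> inv_lim f" "closed B"
    and inf: "infinite {n. proj A n \<subseteq> proj B n}"
  shows "A \<subseteq> B"
proof
  fix x assume "x \<in> A"
  have "proj A i \<subseteq> proj B i" for i
    using inf proj_subset_below[OF A B(1)] unfolding infinite_nat_iff_unbounded_le by blast
  then have "x i \<in> proj B i" for i
    using \<open>x \<in> A\<close> unfolding proj_def by blast
  then show "x \<in> B" using mem_if_coords_in_proj[OF B] A \<open>x \<in> A\<close> by blast
qed

lemma subcontinuum_proj_Icc:
  assumes "subcontinuum A (inv_lim f)"
  obtains l r where "\<And>n. proj A n = {l n..r n}" "\<And>n. 0 \<le> l n \<and> l n \<le> r n \<and> r n \<le> 1"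
proof
  have A: "A \<subseteq> inv_lim f" "A \<noteq> {}" "compact A" "connected A"
    using assms unfolding subcontinuum_def by auto
  fix n
  have cont: "continuous_on A (\<lambda>x. x n)"
    by (rule continuous_on_subset[OF continuous_on_product_coordinates]) simp
  have "compact (proj A n)" "connected (proj A n)"
    unfolding proj_def using compact_continuous_image[OF cont A(3)]
      connected_continuous_image[OF cont A(4)] .
  then obtain a b where ab: "proj A n = {a..b}"
    by (meson connected_compact_interval_1)
  moreover have "proj A n \<noteq> {}" "proj A n \<subseteq> {0..1}"
    using A(1,2) unfolding proj_def inv_lim_def by auto
  ultimately have "0 \<le> a" "a \<le> b" "b \<le> 1"
    by auto
  then show "proj A n = {Inf (proj A n)..Sup (proj A n)}"
    and "0 \<le> Inf (proj A n) \<and> Inf (proj A n) \<le> Sup (proj A n) \<and> Sup (proj A n) \<le> 1"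
    using ab by auto
qed

lemma Icc_nested_if_common_bound:
  fixes c :: real
  assumes "c = 0 \<or> c = 1" "c \<in> {a..b}" "c \<in> {a'..b'}" "0 \<le> a" "b \<le> 1" "0 \<le> a'" "b' \<le> 1"
  shows "{a..b} \<subseteq> {a'..b'} \<or> {a'..b'} \<subseteq> {a..b}"
  using assms(1)
proof
  assume "c = 0"
  then have "a = 0" "a' = 0" using assms(2-7) by auto
  then show ?thesis by (cases "b \<le> b'") auto
next
  assume "c = 1"
  then have "b = 1" "b' = 1" using assms(2-7) by auto
  then show ?thesis by (cases "a \<le> a'") auto
qed

lemma endpoint_inv_limI:
  fixes c :: real
  assumes q: "q \<in> inv_lim f" and c: "c = 0 \<or> c = 1" and M: "infinite M"
    and near: "\<And>A. subcontinuum A (inv_lim f) \<Longrightarrow> q \<in> A \<Longrightarrow>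
      A \<subseteq> {q} \<or> (\<exists>N. \<forall>n\<in>M. N \<le> n \<longrightarrow> c \<in> proj A n)"
  shows "endpoint (inv_lim f) q"
  unfolding endpoint_def
proof (intro conjI q allI impI)
  fix A B
  assume A: "subcontinuum A (inv_lim f)" and B: "subcontinuum B (inv_lim f)"
    and "q \<in> A" "q \<in> B"
  have AX: "A \<subseteq> inv_lim f" "closed A" and BX: "B \<subseteq> inv_lim f" "closed B"
    using A B unfolding subcontinuum_def by (auto intro: compact_imp_closed)
  show "A \<subseteq> B \<or> B \<subseteq> A"
  proof (cases "A \<subseteq> {q} \<or> B \<subseteq> {q}")
    case True
    then show ?thesis using \<open>q \<in> A\<close> \<open>q \<in> B\<close> by blast
  next
    case False
    then obtain NA NB where NA: "\<And>n. n \<in> M \<Longrightarrow> NA \<le> n \<Longrightarrow> c \<in> proj A n"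
      and NB: "\<And>n. n \<in> M \<Longrightarrow> NB \<le> n \<Longrightarrow> c \<in> proj B n"
      using near[OF A \<open>q \<in> A\<close>] near[OF B \<open>q \<in> B\<close>] by blast
    obtain lA rA where lrA: "\<And>n. proj A n = {lA n..rA n}" "\<And>n. 0 \<le> lA n \<and> lA n \<le> rA n \<and> rA n \<le> 1"
      using subcontinuum_proj_Icc[OF A] by blast
    obtain lB rB where lrB: "\<And>n. proj B n = {lB n..rB n}" "\<And>n. 0 \<le> lB n \<and> lB n \<le> rB n \<and> rB n \<le> 1"
      using subcontinuum_proj_Icc[OF B] by blast
    have "proj A n \<subseteq> proj B n \<or> proj B n \<subseteq> proj A n" if "n \<in> M - {..<max NA NB}" for n
    proof -
      have "c \<in> {lA n..rA n}" "c \<in> {lB n..rB n}"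
        using NA NB that unfolding lrA(1) lrB(1) by auto
      then show ?thesis
        unfolding lrA(1) lrB(1) using Icc_nested_if_common_bound[OF c] lrA(2)[of n] lrB(2)[of n]
        by blast
    qed
    then have "M - {..<max NA NB} \<subseteq> {n. proj A n \<subseteq> proj B n} \<union> {n. proj B n \<subseteq> proj A n}"
      by blast
    moreover have "infinite (M - {..<max NA NB})"
      using M by simp
    ultimately have "infinite {n. proj A n \<subseteq> proj B n} \<or> infinite {n. proj B n \<subseteq> proj A n}"
      by (meson finite_UnI finite_subset)
    then show ?thesis
      using subset_if_frequently_proj_subset AX BX by blast
  qed
qed

lemma Icc_subset_image:
  fixes f :: "real \<Rightarrow> real"
  assumes "continuous_on {a..b} f" "x \<in> {a..b}" "y \<in> {a..b}"
  shows "{f x..f y} \<subseteq> f ` {a..b}"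
  by (meson assms connected_Icc connected_contains_Icc connected_continuous_image imageI)

lemma compact_level_set:
  fixes f :: "real \<Rightarrow> real"
  assumes "continuous_on {a..b} f"
  shows "compact {t \<in> {a..b}. f t = c}"
proof -
  have "closed {t \<in> {a..b}. f t = c}"
    using continuous_closed_preimage_constant[OF assms] by simp
  then have "compact ({a..b} \<inter> {t \<in> {a..b}. f t = c})"
    by (rule compact_Int_closed[OF compact_Icc])
  moreover have "{a..b} \<inter> {t \<in> {a..b}. f t = c} = {t \<in> {a..b}. f t = c}"
    by blast
  ultimately show ?thesis
    by simp
qed

lemma exists_Icc_image_eq_ordered:
  fixes f :: "real \<Rightarrow> real"
  assumes cont: "continuous_on {x..y} f" and "x \<le> y" "f x = c" "f y = d" "c < d"
  obtains a b where "x \<le> a" "a < b" "b \<le> y" "f ` {a..b} = {c..d}"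
proof -
  \<comment> \<open>a is the last point of [x, y] with value c, b the first point after a with value d\<close>
  have "x \<in> {t \<in> {x..y}. f t = c}"
    using assms(2,3) by simp
  then obtain a where a: "a \<in> {x..y}" "f a = c"
    and a_max: "\<And>t. t \<in> {x..y} \<Longrightarrow> f t = c \<Longrightarrow> t \<le> a"
    using compact_attains_sup[OF compact_level_set[OF cont, of c]]
    by (metis (mono_tags) empty_iff mem_Collect_eq)
  have above_c: "c < f t" if t: "a < t" "t \<le> y" for t
  proof (rule ccontr)
    assume "\<not> c < f t"
    moreover have "continuous_on {t..y} f"
      using continuous_on_subset[OF cont] t a by auto
    ultimately obtain s where "t \<le> s" "s \<le> y" "f s = c"
      using IVT'[of f t c y] t assms(4,5) by auto
    then show False using a_max[of s] t a by auto
  qed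
  have cont_a: "continuous_on {a..y} f"
    using continuous_on_subset[OF cont] a by auto
  have "y \<in> {t \<in> {a..y}. f t = d}"
    using a assms(4) by simp
  then obtain b where b: "b \<in> {a..y}" "f b = d"
    and b_min: "\<And>t. t \<in> {a..y} \<Longrightarrow> f t = d \<Longrightarrow> b \<le> t"
    using compact_attains_inf[OF compact_level_set[OF cont_a, of d]]
    by (metis (mono_tags) empty_iff mem_Collect_eq)
  have below_d: "f t < d" if t: "a \<le> t" "t < b" for t
  proof (rule ccontr)
    assume "\<not> f t < d"
    moreover have "continuous_on {a..t} f"
      using continuous_on_subset[OF cont_a] t b by auto
    ultimately obtain s where "a \<le> s" "s \<le> t" "f s = d"
      using IVT'[of f a d t] t a assms(5) by auto
    then show False using b_min[of s] t b by auto
  qed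
  have "a < b" using a b assms(5) by (cases "a = b") auto
  moreover have "f ` {a..b} = {c..d}"
  proof
    show "f ` {a..b} \<subseteq> {c..d}"
      using above_c below_d a b \<open>a < b\<close> by (force simp: le_less)
    show "{c..d} \<subseteq> f ` {a..b}"
      using Icc_subset_image[of a b f a b] continuous_on_subset[OF cont_a] a b \<open>a < b\<close> by auto
  qed
  ultimately show ?thesis using that a b by auto
qed

lemma exists_Icc_image_eq:
  fixes f :: "real \<Rightarrow> real"
  assumes cont: "continuous_on {y0..y1} f" and "c < d" and cover: "{c..d} \<subseteq> f ` {y0..y1}"
  obtains a b where "y0 \<le> a" "a < b" "b \<le> y1" "f ` {a..b} = {c..d}"
proof -
  have "c \<in> f ` {y0..y1}" "d \<in> f ` {y0..y1}"
    using cover \<open>c < d\<close> by auto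
  then obtain x y where x: "x \<in> {y0..y1}" "f x = c" and y: "y \<in> {y0..y1}" "f y = d"
    by (auto simp del: atLeastAtMost_iff)
  show ?thesis
  proof (cases "x \<le> y")
    case True
    have "continuous_on {x..y} f"
      using continuous_on_subset[OF cont] x y by auto
    then obtain a b where "x \<le> a" "a < b" "b \<le> y" "f ` {a..b} = {c..d}"
      using exists_Icc_image_eq_ordered True x(2) y(2) \<open>c < d\<close> by blast
    then show ?thesis using that[of a b] x y by auto
  next
    case False
    have "continuous_on {-x..-y} (f \<circ> uminus)"
      by (intro continuous_on_compose continuous_intros continuous_on_subset[OF cont])
        (use x y in auto)
    then obtain a b where ab: "-x \<le> a" "a < b" "b \<le> -y" "(f \<circ> uminus) ` {a..b} = {c..d}"
      using exists_Icc_image_eq_ordered[of "-x" "-y" "f \<circ> uminus" c d] False x(2) y(2) \<open>c < d\<close>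
      by auto
    then have "f ` {-b..-a} = {c..d}"
      by (metis ab(4) image_comp image_uminus_atLeastAtMost)
    then show ?thesis using that[of "-b" "-a"] ab x y by auto
  qed
qed

lemma Icc_degenerate_if_subset_doubleton:
  fixes a b :: real
  assumes "a \<le> b" "{a..b} \<subseteq> {c, d}"
  shows "a = b"
proof -
  have "(a + b) / 2 \<in> {a..b}" "a \<in> {a..b}" "b \<in> {a..b}"
    using assms(1) by auto
  then have "(a + b) / 2 \<in> {c, d}" "a \<in> {c, d}" "b \<in> {c, d}"
    using assms(2) by blast+
  then show ?thesis
    by auto
qed

lemma admits_splittingI:
  fixes f :: "real \<Rightarrow> real" and l r :: "nat \<Rightarrow> real"
  assumes cont: "continuous_on {0..1} f"
    and bounds: "\<And>n. 0 \<le> l n \<and> l n < r n \<and> r n \<le> 1"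
    and proper: "\<And>n. {l n..r n} \<noteq> {0..1}"
    and img: "\<And>n. f ` {l (Suc n)..r (Suc n)} = {l n..r n}"
    and M: "infinite M"
    and companion: "\<And>n. n \<in> M \<Longrightarrow> \<exists>y0 y1. 0 \<le> y0 \<and> y0 \<le> y1 \<and> y1 \<le> 1 \<and>
       {y0..y1} \<inter> {l n..r n} \<subseteq> {l n, r n} \<and> f ` {l n..r n} \<subseteq> f ` {y0..y1}"
  shows "admits_splitting f"
proof -
  have "tight f l r"
    unfolding tight_def using bounds proper img by (auto intro: less_imp_le)
  \<comment> \<open>index 0 is dropped: only f ` {l n..r n} = {l (n - 1)..r (n - 1)} for n > 0 is known
    to be nondegenerate\<close>
  have "\<exists>ab. 0 \<le> fst ab \<and> fst ab < snd ab \<and> snd ab \<le> 1 \<and>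
      {fst ab..snd ab} \<inter> {l n..r n} \<subseteq> {l n, r n} \<and> f ` {fst ab..snd ab} = f ` {l n..r n}"
    if n: "n \<in> M - {0}" for n
  proof -
    obtain k where k: "n = Suc k" using n by (cases n) auto
    obtain y0 y1 where y: "0 \<le> y0" "y0 \<le> y1" "y1 \<le> 1"
      "{y0..y1} \<inter> {l n..r n} \<subseteq> {l n, r n}" "f ` {l n..r n} \<subseteq> f ` {y0..y1}"
      using companion n by blast
    have "continuous_on {y0..y1} f" "{l k..r k} \<subseteq> f ` {y0..y1}"
      using continuous_on_subset[OF cont] y img[of k] k by auto
    then obtain a b where ab: "y0 \<le> a" "a < b" "b \<le> y1" "f ` {a..b} = {l k..r k}"
      using exists_Icc_image_eq bounds[of k] by blast
    then have "{a..b} \<inter> {l n..r n} \<subseteq> {y0..y1} \<inter> {l n..r n}"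
      by auto
    then have "{a..b} \<inter> {l n..r n} \<subseteq> {l n, r n}"
      using y(4) by (rule subset_trans)
    then show ?thesis
      using y ab img[of k] k by (intro exI[of _ "(a, b)"]) auto
  qed
  then obtain ab where ab: "\<forall>n\<in>M - {0}. 0 \<le> fst (ab n) \<and> fst (ab n) < snd (ab n) \<and>
      snd (ab n) \<le> 1 \<and> {fst (ab n)..snd (ab n)} \<inter> {l n..r n} \<subseteq> {l n, r n} \<and>
      f ` {fst (ab n)..snd (ab n)} = f ` {l n..r n}"
    using bchoice by metis
  define a where "a n = fst (ab n)" for n
  define b where "b n = snd (ab n)" for n
  have "infinite (M - {0})"
    using M by simp
  then have "splitting_seq f l r"
    unfolding splitting_seq_def using \<open>tight f l r\<close> ab
    unfolding a_def[symmetric] b_def[symmetric] by blast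
  then show ?thesis
    unfolding admits_splitting_def by blast
qed

lemma exists_Icc_preimage_chain:
  fixes f :: "real \<Rightarrow> real"
  assumes cont: "continuous_on {a..b} f" and "a < b" and cover: "{a..b} \<subseteq> f ` {a..b}"
  obtains l r where "\<And>n. a \<le> l n \<and> l n < r n \<and> r n \<le> b"
    and "\<And>n. f ` {l (Suc n)..r (Suc n)} = {l n..r n}"
proof -
  let ?P = "\<lambda>(n::nat) (I :: real \<times> real). a \<le> fst I \<and> fst I < snd I \<and> snd I \<le> b"
  let ?Q = "\<lambda>(n::nat) (I :: real \<times> real) J. f ` {fst J..snd J} = {fst I..snd I}"
  have "\<exists>J. ?P (Suc n) J \<and> ?Q n I J" if I: "?P n I" for n I
  proof -
    have "{fst I..snd I} \<subseteq> f ` {a..b}"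
      using I cover by auto
    then obtain x y where "a \<le> x" "x < y" "y \<le> b" "f ` {x..y} = {fst I..snd I}"
      using exists_Icc_image_eq[OF cont] I by blast
    then show ?thesis by (intro exI[of _ "(x, y)"]) simp
  qed
  moreover have "?P 0 (a, b)"
    using \<open>a < b\<close> by simp
  ultimately obtain T where "\<And>n. ?P n (T n) \<and> ?Q n (T n) (T (Suc n))"
    using dependent_nat_choice[of ?P ?Q] by blast
  then show ?thesis
    using that[of "fst \<circ> T" "snd \<circ> T"] by simp
qed

lemma admits_splitting_if_horseshoe:
  fixes f :: "real \<Rightarrow> real"
  assumes cont: "continuous_on {0..1} f"
    and a: "0 \<le> a1" "a1 < a2" "a2 \<le> 1" and b: "0 \<le> b1" "b1 < b2" "b2 \<le> 1"
    and disjoint: "{b1..b2} \<inter> {a1..a2} \<subseteq> {a1, a2}"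
    and cover_a: "{a1..a2} \<subseteq> f ` {a1..a2}" and cover_b: "{a1..a2} \<subseteq> f ` {b1..b2}"
  shows "admits_splitting f"
proof -
  obtain l r where lr: "\<And>n. a1 \<le> l n \<and> l n < r n \<and> r n \<le> a2"
    and img: "\<And>n. f ` {l (Suc n)..r (Suc n)} = {l n..r n}"
    using exists_Icc_preimage_chain[OF continuous_on_subset[OF cont] a(2) cover_a] a by auto
  have "{a1..a2} \<noteq> {0..1}"
  proof
    assume "{a1..a2} = {0..1}"
    then have "{b1..b2} \<subseteq> {a1, a2}"
      using disjoint b by auto
    then show False
      using Icc_degenerate_if_subset_doubleton[of b1 b2 a1 a2] b(2) by simp
  qed
  have proper: "{l n..r n} \<noteq> {0..1}" for n
  proof
    assume "{l n..r n} = {0..1}"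
    then have "0 \<in> {l n..r n}" "1 \<in> {l n..r n}"
      by simp_all
    then have "a1 = 0" "a2 = 1"
      using lr[of n] a by auto
    then show False
      using \<open>{a1..a2} \<noteq> {0..1}\<close> by simp
  qed
  have bounds: "0 \<le> l n \<and> l n < r n \<and> r n \<le> 1" for n
    using lr[of n] a by linarith
  show ?thesis
  proof (rule admits_splittingI[of f l r, OF cont bounds proper img])
    show "infinite (- {0::nat})"
      by simp
    fix n :: nat assume "n \<in> - {0}"
    then obtain k where k: "n = Suc k" by (cases n) auto
    have "{b1..b2} \<inter> {l n..r n} \<subseteq> {l n, r n}"
    proof
      fix x assume x: "x \<in> {b1..b2} \<inter> {l n..r n}"
      then have "x \<in> {b1..b2} \<inter> {a1..a2}"
        using lr[of n] by auto
      then have "x = a1 \<or> x = a2"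
        using disjoint by blast
      then show "x \<in> {l n, r n}"
        using x lr[of n] by auto
    qed
    moreover have "f ` {l n..r n} \<subseteq> f ` {b1..b2}"
      using img[of k] lr[of k] cover_b k by auto
    ultimately show "\<exists>y0 y1. 0 \<le> y0 \<and> y0 \<le> y1 \<and> y1 \<le> 1 \<and>
       {y0..y1} \<inter> {l n..r n} \<subseteq> {l n, r n} \<and> f ` {l n..r n} \<subseteq> f ` {y0..y1}"
      using b by (intro exI[of _ b1] exI[of _ b2]) auto
  qed
qed

definition onto_outside :: "(real \<Rightarrow> real) \<Rightarrow> real \<Rightarrow> real \<Rightarrow> bool" where
  "onto_outside f l r \<longleftrightarrow> (\<exists>y0 y1. 0 \<le> y0 \<and> y0 \<le> y1 \<and> y1 \<le> 1 \<and>
     {y0..y1} \<inter> {l..r} \<subseteq> {l, r} \<and> {0..1} \<subseteq> f ` {y0..y1})"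

lemma not_onto_outside_unit_interval: "\<not> onto_outside f 0 1"
proof
  assume "onto_outside f 0 1"
  then obtain y0 y1 where y: "0 \<le> y0" "y0 \<le> y1" "y1 \<le> 1" "{y0..y1} \<subseteq> {0, 1}"
    and cover: "{0..1} \<subseteq> f ` {y0..y1}"
    unfolding onto_outside_def by auto
  have "y0 = y1"
    using Icc_degenerate_if_subset_doubleton y(2,4) .
  moreover have "(0::real) \<in> {0..1}" "(1::real) \<in> {0..1}"
    by simp_all
  ultimately have "0 \<in> {f y0}" "1 \<in> {f y0}"
    using cover by (simp_all add: subset_iff)
  then show False
    by simp
qed

lemma Icc_eq_unit_interval_below:
  assumes onto: "f ` {0..1} = {0..1}"
    and img: "\<And>n. f ` {l (Suc n)..r (Suc n)} = {l n..r n}"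
    and "{l n..r n} = {0..1::real}" "i \<le> n"
  shows "{l i..r i} = {0..1}"
  using \<open>i \<le> n\<close>
proof (induction rule: inc_induct)
  case base
  show ?case by fact
next
  case (step k)
  then show ?case using img[of k] onto by simp
qed

lemma infinite_shift_nat:
  assumes "infinite {n. P n}"
  shows "infinite {j::nat. P (j + k)}"
proof
  assume "finite {j. P (j + k)}"
  moreover have "{n. P n} \<subseteq> {..<k} \<union> (\<lambda>j. j + k) ` {j. P (j + k)}"
  proof
    fix n assume "n \<in> {n. P n}"
    then show "n \<in> {..<k} \<union> (\<lambda>j. j + k) ` {j. P (j + k)}"
      by (cases "n < k") (auto intro!: image_eqI[of _ _ "n - k"])
  qed
  ultimately show False
    using assms finite_subset by blast
qed

lemma finite_onto_outside:
  fixes f :: "real \<Rightarrow> real" and l r :: "nat \<Rightarrow> real"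
  assumes cont: "continuous_on {0..1} f" and onto: "f ` {0..1} = {0..1}"
    and nosplit: "\<not> admits_splitting f"
    and bounds: "\<And>n. 0 \<le> l n \<and> l n \<le> r n \<and> r n \<le> 1"
    and img: "\<And>n. f ` {l (Suc n)..r (Suc n)} = {l n..r n}"
    and nondegenerate: "\<And>n. m \<le> n \<Longrightarrow> l n < r n"
  shows "finite {n. onto_outside f (l n) (r n)}"
proof (rule ccontr)
  assume inf: "infinite {n. onto_outside f (l n) (r n)}"
  then obtain n0 where n0: "onto_outside f (l n0) (r n0)"
    using not_finite_existsD by blast
  have proper: "{l n..r n} \<noteq> {0..1}" if "n0 \<le> n" for n
  proof
    assume "{l n..r n} = {0..1}"
    then have "{l n0..r n0} = {0..1}"
      using Icc_eq_unit_interval_below[of f l r, OF onto img] that by blast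
    then have "l n0 = 0" "r n0 = 1"
      using bounds[of n0] by simp_all
    then show False
      using n0 not_onto_outside_unit_interval by metis
  qed
  define N where "N = max n0 m"
  have "admits_splitting f"
  proof (rule admits_splittingI[of f "\<lambda>j. l (j + N)" "\<lambda>j. r (j + N)", OF cont])
    fix j
    show "0 \<le> l (j + N) \<and> l (j + N) < r (j + N) \<and> r (j + N) \<le> 1"
      using bounds[of "j + N"] nondegenerate[of "j + N"] by (simp add: N_def)
    show "{l (j + N)..r (j + N)} \<noteq> {0..1}"
      using proper by (simp add: N_def)
    show "f ` {l (Suc j + N)..r (Suc j + N)} = {l (j + N)..r (j + N)}"
      using img[of "j + N"] by simp
  next
    show "infinite {j. onto_outside f (l (j + N)) (r (j + N))}"
      using infinite_shift_nat[OF inf] .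
  next
    fix j assume "j \<in> {j. onto_outside f (l (j + N)) (r (j + N))}"
    then obtain y0 y1 where y: "0 \<le> y0" "y0 \<le> y1" "y1 \<le> 1"
      "{y0..y1} \<inter> {l (j + N)..r (j + N)} \<subseteq> {l (j + N), r (j + N)}" "{0..1} \<subseteq> f ` {y0..y1}"
      unfolding onto_outside_def by blast
    have "f ` {l (j + N)..r (j + N)} \<subseteq> {0..1}"
      using bounds[of "j + N"] onto by auto
    then show "\<exists>y0 y1. 0 \<le> y0 \<and> y0 \<le> y1 \<and> y1 \<le> 1 \<and>
       {y0..y1} \<inter> {l (j + N)..r (j + N)} \<subseteq> {l (j + N), r (j + N)} \<and>
       f ` {l (j + N)..r (j + N)} \<subseteq> f ` {y0..y1}"
      using y by blast
  qed
  with nosplit show False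
    by contradiction
qed

lemma eventually_not_onto_outside:
  fixes f :: "real \<Rightarrow> real"
  assumes cont: "continuous_on {0..1} f" and onto: "f ` {0..1} = {0..1}"
    and nosplit: "\<not> admits_splitting f"
    and A: "subcontinuum A (inv_lim f)" and "q \<in> A" "\<not> A \<subseteq> {q}"
    and lr: "\<And>n. proj A n = {l n..r n}" "\<And>n. 0 \<le> l n \<and> l n \<le> r n \<and> r n \<le> 1"
  shows "\<exists>N. \<forall>n\<ge>N. \<not> onto_outside f (l n) (r n)"
proof -
  have AX: "A \<subseteq> inv_lim f"
    using A unfolding subcontinuum_def by simp
  obtain x where "x \<in> A" "x \<noteq> q"
    using \<open>\<not> A \<subseteq> {q}\<close> by blast
  then obtain m where "x m \<noteq> q m"
    by blast
  have "l n < r n" if "m \<le> n" for n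
  proof -
    have "x n \<noteq> q n"
      using inv_lim_eq_below[of x f q n m] \<open>x m \<noteq> q m\<close> that AX \<open>x \<in> A\<close> \<open>q \<in> A\<close> by blast
    moreover have "x n \<in> {l n..r n}" "q n \<in> {l n..r n}"
      using \<open>x \<in> A\<close> \<open>q \<in> A\<close> lr(1)[of n] unfolding proj_def by blast+
    ultimately show ?thesis
      by auto
  qed
  moreover have "f ` {l (Suc n)..r (Suc n)} = {l n..r n}" for n
    using image_proj_Suc[OF AX, of n] lr(1) by simp
  ultimately have "finite {n. onto_outside f (l n) (r n)}"
    using finite_onto_outside[of f l r m, OF cont onto nosplit lr(2)] by blast
  then obtain N where "\<And>n. onto_outside f (l n) (r n) \<Longrightarrow> n \<le> N"
    unfolding finite_nat_set_iff_bounded_le by blast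
  then show ?thesis
    by (intro exI[of _ "Suc N"]) (auto simp: not_less_eq_eq[symmetric])
qed

lemma mem_Icc_if_not_onto_outside:
  fixes f :: "real \<Rightarrow> real"
  assumes "\<not> onto_outside f l r" "0 \<le> l" "x \<in> {l..r}" "r \<le> 1" "0 \<le> w" "w \<le> 1"
    and "({0..1} \<subseteq> f ` {0..w} \<and> w \<le> x) \<or> ({0..1} \<subseteq> f ` {w..1} \<and> x \<le> w)"
  shows "w \<in> {l..r}"
  using assms(7)
proof
  assume left: "{0..1} \<subseteq> f ` {0..w} \<and> w \<le> x"
  have "l \<le> w"
  proof (rule ccontr)
    assume "\<not> l \<le> w"
    then have "f ` {0..w} \<subseteq> f ` {0..l}"
      by (intro image_mono) auto
    then have "{0..1} \<subseteq> f ` {0..l}"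
      using left by blast
    then have "onto_outside f l r"
      unfolding onto_outside_def using assms(2-4)
      by (intro exI[of _ 0] exI[of _ l]) auto
    then show False
      using assms(1) by contradiction
  qed
  then show ?thesis
    using left assms(3) by auto
next
  assume right: "{0..1} \<subseteq> f ` {w..1} \<and> x \<le> w"
  have "w \<le> r"
  proof (rule ccontr)
    assume "\<not> w \<le> r"
    then have "f ` {w..1} \<subseteq> f ` {r..1}"
      by (intro image_mono) auto
    then have "{0..1} \<subseteq> f ` {r..1}"
      using right by blast
    then have "onto_outside f l r"
      unfolding onto_outside_def using assms(2-4)
      by (intro exI[of _ r] exI[of _ 1]) auto
    then show False
      using assms(1) by contradiction
  qed
  then show ?thesis
    using right assms(3) by auto
qed

lemma endpoint_if_onto_side:
  fixes f :: "real \<Rightarrow> real"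
  assumes cont: "continuous_on {0..1} f" and onto: "f ` {0..1} = {0..1}"
    and nosplit: "\<not> admits_splitting f"
    and q: "q \<in> inv_lim f" and w: "0 \<le> w" "w \<le> 1" "f w = 0 \<or> f w = 1"
    and side: "({0..1} \<subseteq> f ` {0..w} \<and> infinite {n. w \<le> q n}) \<or>
               ({0..1} \<subseteq> f ` {w..1} \<and> infinite {n. q n \<le> w})"
  shows "endpoint (inv_lim f) q"
proof -
  define S where "S = {n. ({0..1} \<subseteq> f ` {0..w} \<and> w \<le> q n) \<or> ({0..1} \<subseteq> f ` {w..1} \<and> q n \<le> w)}"
  have "infinite S"
    using side by (auto simp: S_def elim: infinite_super)
  then have M: "infinite {n. Suc n \<in> S}"
    using infinite_shift_nat[of "\<lambda>n. n \<in> S" 1] by simp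
  show ?thesis
  proof (rule endpoint_inv_limI[OF q w(3) M])
    fix A assume A: "subcontinuum A (inv_lim f)" "q \<in> A"
    have AX: "A \<subseteq> inv_lim f"
      using A(1) unfolding subcontinuum_def by simp
    show "A \<subseteq> {q} \<or> (\<exists>N. \<forall>n\<in>{n. Suc n \<in> S}. N \<le> n \<longrightarrow> f w \<in> proj A n)"
    proof (cases "A \<subseteq> {q}")
      case False
      obtain l r where lr: "\<And>n. proj A n = {l n..r n}" "\<And>n. 0 \<le> l n \<and> l n \<le> r n \<and> r n \<le> 1"
        using subcontinuum_proj_Icc[OF A(1)] by blast
      obtain N where N: "\<And>n. N \<le> n \<Longrightarrow> \<not> onto_outside f (l n) (r n)"
        using eventually_not_onto_outside[OF cont onto nosplit A False lr] by blast
      have "f w \<in> proj A n" if "Suc n \<in> S" "N \<le> n" for n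
      proof -
        have "q (Suc n) \<in> {l (Suc n)..r (Suc n)}"
          using A(2) lr(1) unfolding proj_def by blast
        moreover have "\<not> onto_outside f (l (Suc n)) (r (Suc n))"
          using N that(2) by simp
        moreover have "0 \<le> l (Suc n)" "r (Suc n) \<le> 1"
          using lr(2) by auto
        moreover have "({0..1} \<subseteq> f ` {0..w} \<and> w \<le> q (Suc n)) \<or>
            ({0..1} \<subseteq> f ` {w..1} \<and> q (Suc n) \<le> w)"
          using that(1) unfolding S_def by simp
        ultimately have "w \<in> proj A (Suc n)"
          unfolding lr(1) using mem_Icc_if_not_onto_outside w(1,2) by blast
        then show ?thesis
          using image_proj_Suc[OF AX, of n] by blast
      qed
      then show ?thesis
        by blast
    qed simp
  qed
qed

lemma endpoint_if_frequently_above_preimages: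
  fixes f :: "real \<Rightarrow> real"
  assumes cont: "continuous_on {0..1} f" and onto: "f ` {0..1} = {0..1}"
    and nosplit: "\<not> admits_splitting f" and q: "q \<in> inv_lim f"
    and u: "u \<in> {0..1}" "f u = 1" and z: "z \<in> {0..1}" "f z = 0"
    and above: "infinite {n. max u z \<le> q n}"
  shows "endpoint (inv_lim f) q"
proof -
  have "{0..1} \<subseteq> f ` {0..max u z}"
    using Icc_subset_image[of 0 "max u z" f z u] continuous_on_subset[OF cont] u z by auto
  moreover have "f (max u z) = 0 \<or> f (max u z) = 1"
    using u z by (simp add: max_def)
  ultimately show ?thesis
    using endpoint_if_onto_side[OF cont onto nosplit q, of "max u z"] u z above by auto
qed

lemma endpoint_if_frequently_below_preimages:
  fixes f :: "real \<Rightarrow> real"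
  assumes cont: "continuous_on {0..1} f" and onto: "f ` {0..1} = {0..1}"
    and nosplit: "\<not> admits_splitting f" and q: "q \<in> inv_lim f"
    and u: "u \<in> {0..1}" "f u = 1" and z: "z \<in> {0..1}" "f z = 0"
    and below: "infinite {n. q n \<le> min u z}"
  shows "endpoint (inv_lim f) q"
proof -
  have "{0..1} \<subseteq> f ` {min u z..1}"
    using Icc_subset_image[of "min u z" 1 f z u] continuous_on_subset[OF cont] u z by auto
  moreover have "f (min u z) = 0 \<or> f (min u z) = 1"
    using u z by (simp add: min_def)
  ultimately show ?thesis
    using endpoint_if_onto_side[OF cont onto nosplit q, of "min u z"] u z below by auto
qed

lemma less_image_if_no_fixed_point_below:
  fixes f :: "real \<Rightarrow> real"
  assumes cont: "continuous_on {0..1} f" and into: "f ` {0..1} \<subseteq> {0..1}"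
    and x: "x \<in> {0..1}" and no_fixed: "\<And>y. y \<in> {0..x} \<Longrightarrow> f y \<noteq> y"
  shows "x < f x"
proof (rule ccontr)
  assume "\<not> x < f x"
  moreover have "0 \<le> f 0"
    using into by (simp add: image_subset_iff)
  moreover have "continuous_on {0..x} (\<lambda>y. f y - y)"
    using continuous_on_subset[OF cont] x by (auto intro!: continuous_intros)
  ultimately obtain y where "0 \<le> y" "y \<le> x" "f y - y = 0"
    using IVT2'[of "\<lambda>y. f y - y" x 0 0] x by auto
  then show False
    using no_fixed by auto
qed

lemma image_less_if_no_fixed_point_above:
  fixes f :: "real \<Rightarrow> real"
  assumes cont: "continuous_on {0..1} f" and into: "f ` {0..1} \<subseteq> {0..1}"
    and x: "x \<in> {0..1}" and no_fixed: "\<And>y. y \<in> {x..1} \<Longrightarrow> f y \<noteq> y"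
  shows "f x < x"
proof (rule ccontr)
  assume "\<not> f x < x"
  moreover have "f 1 \<le> 1"
    using into by (simp add: image_subset_iff)
  moreover have "continuous_on {x..1} (\<lambda>y. f y - y)"
    using continuous_on_subset[OF cont] x by (auto intro!: continuous_intros)
  ultimately obtain y where "x \<le> y" "y \<le> 1" "f y - y = 0"
    using IVT2'[of "\<lambda>y. f y - y" 1 0 x] x by auto
  then show False
    using no_fixed by auto
qed

lemma exists_period_two_point_below:
  fixes f :: "real \<Rightarrow> real"
  assumes cont: "continuous_on {0..1} f" and into: "f ` {0..1} \<subseteq> {0..1}"
    and c: "c \<in> {0..1}" "f (f c) \<le> c"
  shows "\<exists>x\<in>{0..c}. f (f x) = x"
proof -
  have "continuous_on {0..1} (\<lambda>y. f (f y) - y)"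
    by (intro continuous_intros continuous_on_compose2[OF cont cont into])
  then have "continuous_on {0..c} (\<lambda>y. f (f y) - y)"
    by (rule continuous_on_subset) (use c in auto)
  moreover have "0 \<le> f (f 0)"
    using into by (simp add: image_subset_iff)
  ultimately obtain x where "0 \<le> x" "x \<le> c" "f (f x) - x = 0"
    using IVT2'[of "\<lambda>y. f (f y) - y" c 0 0] c by auto
  then show ?thesis
    by auto
qed

lemma preimages_of_bounds:
  assumes "f ` {0..1} = {0..1::real}"
  obtains u z where "u \<in> {0..1}" "f u = 1" "z \<in> {0..1}" "f z = 0"
proof -
  have "1 \<in> f ` {0..1}" "0 \<in> f ` {0..1}"
    using assms by simp_all
  then show ?thesis
    using that by (metis imageE)
qed

lemma const_in_inv_lim: "d \<in> {0..1} \<Longrightarrow> f d = d \<Longrightarrow> (\<lambda>n. d) \<in> inv_lim f"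
  by (simp add: inv_lim_def)

lemma endpoint_greatest_fixed_point:
  fixes f :: "real \<Rightarrow> real"
  assumes cont: "continuous_on {0..1} f" and onto: "f ` {0..1} = {0..1}"
    and nosplit: "\<not> admits_splitting f"
    and d: "d \<in> {0..1}" "f d = d" and greatest: "\<And>x. x \<in> {0..1} \<Longrightarrow> f x = x \<Longrightarrow> x \<le> d"
    and e: "e \<in> {0..1}" "f e = e" "e \<noteq> d"
  shows "endpoint (inv_lim f) (\<lambda>n. d)"
proof -
  have into: "f ` {0..1} \<subseteq> {0..1}"
    using onto by simp
  obtain u z where u: "u \<in> {0..1}" "f u = 1" and z: "z \<in> {0..1}" "f z = 0"
    using preimages_of_bounds[OF onto] .
  have "u \<le> d"
  proof (rule ccontr)
    assume "\<not> u \<le> d"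
    then have "f y \<noteq> y" if "y \<in> {u..1}" for y
      using greatest[of y] that u(1) by fastforce
    then have "f u < u"
      by (rule image_less_if_no_fixed_point_above[OF cont into u(1)])
    then show False
      using u by simp
  qed
  have "z \<le> d"
  proof (rule ccontr)
    assume "\<not> z \<le> d"
    have "e < d"
      using greatest[OF e(1,2)] e(3) by simp
    have cover_ed: "{e..d} \<subseteq> f ` {e..d}"
      using Icc_subset_image[of e d f e d] continuous_on_subset[OF cont] d e \<open>e < d\<close> by auto
    have cover_dz: "{e..d} \<subseteq> f ` {d..z}"
      using Icc_subset_image[of d z f z d] continuous_on_subset[OF cont] d z e \<open>\<not> z \<le> d\<close> by auto
    have disjoint: "{d..z} \<inter> {e..d} \<subseteq> {e, d}"
      by auto
    have "admits_splitting f"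
      by (rule admits_splitting_if_horseshoe[OF cont _ _ _ _ _ _ disjoint cover_ed cover_dz])
        (use d e z \<open>e < d\<close> \<open>\<not> z \<le> d\<close> in auto)
    then show False
      using nosplit by contradiction
  qed
  then have "infinite {n::nat. max u z \<le> d}"
    using \<open>u \<le> d\<close> by simp
  then show ?thesis
    by (rule endpoint_if_frequently_above_preimages[OF cont onto nosplit
          const_in_inv_lim[of d f, OF d] u z])
qed

lemma endpoint_least_fixed_point:
  fixes f :: "real \<Rightarrow> real"
  assumes cont: "continuous_on {0..1} f" and onto: "f ` {0..1} = {0..1}"
    and nosplit: "\<not> admits_splitting f"
    and e: "e \<in> {0..1}" "f e = e" and least: "\<And>x. x \<in> {0..1} \<Longrightarrow> f x = x \<Longrightarrow> e \<le> x"
    and d: "d \<in> {0..1}" "f d = d" "d \<noteq> e"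
  shows "endpoint (inv_lim f) (\<lambda>n. e)"
proof -
  have into: "f ` {0..1} \<subseteq> {0..1}"
    using onto by simp
  obtain u z where u: "u \<in> {0..1}" "f u = 1" and z: "z \<in> {0..1}" "f z = 0"
    using preimages_of_bounds[OF onto] .
  have "e \<le> z"
  proof (rule ccontr)
    assume "\<not> e \<le> z"
    then have "f y \<noteq> y" if "y \<in> {0..z}" for y
      using least[of y] that z(1) by fastforce
    then have "z < f z"
      by (rule less_image_if_no_fixed_point_below[OF cont into z(1)])
    then show False
      using z by simp
  qed
  have "e \<le> u"
  proof (rule ccontr)
    assume "\<not> e \<le> u"
    have "e < d"
      using least[OF d(1,2)] d(3) by simp
    have cover_ed: "{e..d} \<subseteq> f ` {e..d}"
      using Icc_subset_image[of e d f e d] continuous_on_subset[OF cont] d e \<open>e < d\<close> by auto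
    have cover_ue: "{e..d} \<subseteq> f ` {u..e}"
      using Icc_subset_image[of u e f e u] continuous_on_subset[OF cont] d u e \<open>\<not> e \<le> u\<close> by auto
    have disjoint: "{u..e} \<inter> {e..d} \<subseteq> {e, d}"
      by auto
    have "admits_splitting f"
      by (rule admits_splitting_if_horseshoe[OF cont _ _ _ _ _ _ disjoint cover_ed cover_ue])
        (use d e u \<open>e < d\<close> \<open>\<not> e \<le> u\<close> in auto)
    then show False
      using nosplit by contradiction
  qed
  then have "infinite {n::nat. e \<le> min u z}"
    using \<open>e \<le> z\<close> by simp
  then show ?thesis
    by (rule endpoint_if_frequently_below_preimages[OF cont onto nosplit
          const_in_inv_lim[of e f, OF e] u z])
qed

lemma zero_preimage_less_two_cycle:
  fixes f :: "real \<Rightarrow> real"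
  assumes cont: "continuous_on {0..1} f" and into: "f ` {0..1} \<subseteq> {0..1}"
    and ab: "a < b" "b \<le> 1" "f a = b" "f b = a"
    and least: "\<And>x. 0 \<le> x \<Longrightarrow> x < a \<Longrightarrow> f (f x) \<noteq> x"
    and u: "u \<in> {0..1}" "f u = 1" "u < a" and z: "z \<in> {0..1}" "f z = 0"
  shows "z < b"
proof (rule ccontr)
  assume "\<not> z < b"
  moreover have "z \<noteq> b"
    using z ab u by auto
  ultimately have "b < z"
    by simp
  have "continuous_on {u..a} f"
    using continuous_on_subset[OF cont] u ab by auto
  then obtain w where w: "u \<le> w" "w \<le> a" "f w = z"
    using IVT2'[of f a z u] ab u z \<open>b < z\<close> by auto
  have "w < a"
    using w ab \<open>b < z\<close> by (cases "w = a") auto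
  moreover have "f (f w) \<le> w"
    using w z u by simp
  then obtain x where "x \<in> {0..w}" "f (f x) = x"
    using exists_period_two_point_below[OF cont into, of w] w u ab by auto
  ultimately show False
    using least[of x] by auto
qed

lemma endpoint_if_visits_two_cycle:
  fixes f :: "real \<Rightarrow> real"
  assumes cont: "continuous_on {0..1} f" and onto: "f ` {0..1} = {0..1}"
    and nosplit: "\<not> admits_splitting f"
    and ab: "0 \<le> a" "a < b" "b \<le> 1" "f a = b" "f b = a"
    and least: "\<And>x. 0 \<le> x \<Longrightarrow> x < a \<Longrightarrow> f (f x) \<noteq> x"
    and q: "q \<in> inv_lim f" and visits: "infinite {n. q n = a}" "infinite {n. q n = b}"
  shows "endpoint (inv_lim f) q"
proof -
  have into: "f ` {0..1} \<subseteq> {0..1}"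
    using onto by simp
  obtain u z where u: "u \<in> {0..1}" "f u = 1" and z: "z \<in> {0..1}" "f z = 0"
    using preimages_of_bounds[OF onto] .
  have "a < z"
  proof (rule ccontr)
    assume "\<not> a < z"
    then have "f y \<noteq> y" if "y \<in> {0..z}" for y
      using least[of y] that ab by (cases "y = a") auto
    then have "z < f z"
      by (rule less_image_if_no_fixed_point_below[OF cont into z(1)])
    then show False
      using z by simp
  qed
  show ?thesis
  proof (cases "\<exists>u'\<in>{0..1}. f u' = 1 \<and> a \<le> u'")
    case True
    then obtain u' where u': "u' \<in> {0..1}" "f u' = 1" "a \<le> u'"
      by blast
    have "infinite {n. q n \<le> min u' z}"
      using visits(1) by (rule infinite_super[rotated]) (use u' \<open>a < z\<close> in auto)
    then show ?thesis
      by (rule endpoint_if_frequently_below_preimages[OF cont onto nosplit q u'(1,2) z])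
  next
    case False
    then have "u < a"
      using u by force
    then have "z < b"
      using zero_preimage_less_two_cycle[OF cont into ab(2-5) least u _ z] by blast
    have "infinite {n. max u z \<le> q n}"
      using visits(2) by (rule infinite_super[rotated]) (use \<open>u < a\<close> ab \<open>z < b\<close> in auto)
    then show ?thesis
      by (rule endpoint_if_frequently_above_preimages[OF cont onto nosplit q u z])
  qed
qed

lemma exists_two_cycle:
  fixes f :: "real \<Rightarrow> real"
  assumes cont: "continuous_on {0..1} f" and onto: "f ` {0..1} = {0..1}"
    and unique: "\<And>x y. x \<in> {0..1} \<Longrightarrow> y \<in> {0..1} \<Longrightarrow> f x = x \<Longrightarrow> f y = y \<Longrightarrow> x = y"
  shows "\<exists>s t. two_cycle f s t"
proof -
  have into: "f ` {0..1} \<subseteq> {0..1}"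
    using onto by simp
  obtain p where p: "p \<in> {0..1}" "f p = p"
    using brouwer[of "{0..1}" f] cont into by (auto simp: image_subset_iff_funcset)
  obtain u z where u: "u \<in> {0..1}" "f u = 1" and z: "z \<in> {0..1}" "f z = 0"
    using preimages_of_bounds[OF onto] .
  have "u \<le> p"
  proof (rule ccontr)
    assume "\<not> u \<le> p"
    then have "f y \<noteq> y" if "y \<in> {u..1}" for y
      using unique[OF _ p(1) _ p(2), of y] that u(1) by fastforce
    then have "f u < u"
      by (rule image_less_if_no_fixed_point_above[OF cont into u(1)])
    then show False
      using u by simp
  qed
  have "p < z"
  proof (rule ccontr)
    assume "\<not> p < z"
    moreover have "z \<noteq> p"
      using p z u \<open>u \<le> p\<close> by auto
    ultimately have "z < p"
      by simp
    then have "f y \<noteq> y" if "y \<in> {0..z}" for y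
      using unique[OF _ p(1) _ p(2), of y] that z(1) by fastforce
    then have "z < f z"
      by (rule less_image_if_no_fixed_point_below[OF cont into z(1)])
    then show False
      using z by simp
  qed
  have "continuous_on {u..p} f"
    using continuous_on_subset[OF cont] u p by auto
  then obtain c where c: "u \<le> c" "c \<le> p" "f c = z"
    using IVT2'[of f p z u] p u z \<open>u \<le> p\<close> \<open>p < z\<close> by auto
  have "c < p"
    using c p \<open>p < z\<close> by (cases "c = p") auto
  then obtain x where x: "x \<in> {0..c}" "f (f x) = x"
    using exists_period_two_point_below[OF cont into, of c] c u z p by auto
  have "f x \<noteq> x"
    using unique[OF _ p(1) _ p(2), of x] x \<open>c < p\<close> p by auto
  moreover have "x \<in> {0..1}"
    using x \<open>c < p\<close> p by auto
  moreover have "f x \<in> {0..1}"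
    using into \<open>x \<in> {0..1}\<close> by (simp add: image_subset_iff)
  ultimately have "two_cycle f x (f x)"
    unfolding two_cycle_def using x by auto
  then show ?thesis
    by blast
qed

lemma infinite_visits_alternating:
  assumes "c \<in> {s, t}"
  shows "infinite {n::nat. (if even n then s else t) = c}"
  unfolding infinite_nat_iff_unbounded_le
proof
  fix m :: nat
  consider "c = s" | "c = t"
    using assms by blast
  then show "\<exists>n\<ge>m. n \<in> {n. (if even n then s else t) = c}"
  proof cases
    case 1
    then show ?thesis by (intro exI[of _ "2 * m"]) simp
  next
    case 2
    then show ?thesis by (intro exI[of _ "2 * m + 1"]) simp
  qed
qed

lemma endpoint_alternating_two_cycle:
  fixes f :: "real \<Rightarrow> real"
  assumes cont: "continuous_on {0..1} f" and onto: "f ` {0..1} = {0..1}"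
    and nosplit: "\<not> admits_splitting f"
    and st: "two_cycle f s t" and least: "\<And>x. 0 \<le> x \<Longrightarrow> x < min s t \<Longrightarrow> f (f x) \<noteq> x"
  shows "endpoint (inv_lim f) (\<lambda>n. if even n then s else t)"
proof -
  have st': "s \<in> {0..1}" "t \<in> {0..1}" "s \<noteq> t" "f s = t" "f t = s"
    using st unfolding two_cycle_def by auto
  have orbit: "(\<lambda>n. if even n then s else t) \<in> inv_lim f"
    using st' unfolding inv_lim_def by auto
  have visits: "min s t \<in> {s, t}" "max s t \<in> {s, t}"
    by (simp_all add: min_def max_def)
  have ab: "0 \<le> min s t" "min s t < max s t" "max s t \<le> 1"
      "f (min s t) = max s t" "f (max s t) = min s t"
    using st' by (auto simp: min_def max_def)
  show ?thesis
    by (rule endpoint_if_visits_two_cycle[OF cont onto nosplit ab least orbit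
          infinite_visits_alternating[OF visits(1)] infinite_visits_alternating[OF visits(2)]])
qed

lemma no_period_two_point_below_least_two_cycle:
  fixes f :: "real \<Rightarrow> real"
  assumes cont: "continuous_on {0..1} f" and into: "f ` {0..1} \<subseteq> {0..1}"
    and unique: "\<And>x y. x \<in> {0..1} \<Longrightarrow> y \<in> {0..1} \<Longrightarrow> f x = x \<Longrightarrow> f y = y \<Longrightarrow> x = y"
    and st: "two_cycle f s t" and minimal: "\<And>u v. two_cycle f u v \<Longrightarrow> {u, v} \<noteq> {s, t} \<Longrightarrow> s < u"
    and x: "0 \<le> x" "x < min s t"
  shows "f (f x) \<noteq> x"
proof
  assume period: "f (f x) = x"
  have st': "s \<in> {0..1}" "t \<in> {0..1}" "s \<noteq> t" "f s = t" "f t = s"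
    using st unfolding two_cycle_def by auto
  have x01: "x \<in> {0..1}"
    using x st' by auto
  show False
  proof (cases "f x = x")
    case True
    have "min s t \<in> {0..1}"
      using st' by (simp add: min_def)
    moreover have "f y \<noteq> y" if "y \<in> {min s t..1}" for y
      using unique[OF x01, of y] True that x by fastforce
    ultimately have "f (min s t) < min s t"
      by (rule image_less_if_no_fixed_point_above[OF cont into])
    then show False
      using st' by (cases "s \<le> t") (auto simp: min_def)
  next
    case False
    have "f x \<in> {0..1}"
      using into x01 by (simp add: image_subset_iff)
    then have "two_cycle f x (f x)"
      unfolding two_cycle_def using x01 False period by auto
    moreover have "{x, f x} \<noteq> {s, t}"
      using x by (auto simp: doubleton_eq_iff)
    ultimately have "s < x"
      by (rule minimal)
    then show False
      using x by simp
  qed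
qed

theorem proposition3p19:
  fixes f :: "real \<Rightarrow> real"
  assumes cont: "continuous_on {0..1} f"
    and onto: "f ` {0..1} = {0..1}"
    and nosplit: "\<not> admits_splitting f"
  shows "((\<exists>x\<in>{0..1}. \<exists>y\<in>{0..1}. x \<noteq> y \<and> f x = x \<and> f y = y) \<and>
          (\<forall>d e. d \<in> {0..1} \<and> f d = d \<and> (\<forall>x\<in>{0..1}. f x = x \<longrightarrow> x \<le> d) \<and>
                 e \<in> {0..1} \<and> f e = e \<and> (\<forall>x\<in>{0..1}. f x = x \<longrightarrow> e \<le> x) \<longrightarrow>
                 endpoint (inv_lim f) (\<lambda>n. d) \<and> endpoint (inv_lim f) (\<lambda>n. e)))
       \<or>
         ((\<exists>s t. two_cycle f s t) \<and>
          (\<forall>s t. two_cycle f s t \<and>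
                 (\<forall>u v. two_cycle f u v \<and> {u, v} \<noteq> {s, t} \<longrightarrow> s < u) \<longrightarrow>
                 endpoint (inv_lim f) (\<lambda>n. if even n then s else t) \<and>
                 endpoint (inv_lim f) (\<lambda>n. if even n then t else s)))"
proof (cases "\<exists>x\<in>{0..1}. \<exists>y\<in>{0..1}. x \<noteq> y \<and> f x = x \<and> f y = y")
  case True
  then obtain x y where xy: "x \<in> {0..1}" "y \<in> {0..1}" "x \<noteq> y" "f x = x" "f y = y"
    by blast
  have "endpoint (inv_lim f) (\<lambda>n. d) \<and> endpoint (inv_lim f) (\<lambda>n. e)"
    if "d \<in> {0..1}" "f d = d" "\<forall>x\<in>{0..1}. f x = x \<longrightarrow> x \<le> d"
      "e \<in> {0..1}" "f e = e" "\<forall>x\<in>{0..1}. f x = x \<longrightarrow> e \<le> x" for d e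
  proof
    obtain e' where "e' \<in> {0..1}" "f e' = e'" "e' \<noteq> d"
      using xy by metis
    then show "endpoint (inv_lim f) (\<lambda>n. d)"
      using endpoint_greatest_fixed_point[OF cont onto nosplit] that by blast
    obtain d' where "d' \<in> {0..1}" "f d' = d'" "d' \<noteq> e"
      using xy by metis
    then show "endpoint (inv_lim f) (\<lambda>n. e)"
      using endpoint_least_fixed_point[OF cont onto nosplit] that by blast
  qed
  then show ?thesis
    using True by blast
next
  case False
  then have unique: "\<And>x y. x \<in> {0..1} \<Longrightarrow> y \<in> {0..1} \<Longrightarrow> f x = x \<Longrightarrow> f y = y \<Longrightarrow> x = y"
    by blast
  have "endpoint (inv_lim f) (\<lambda>n. if even n then s else t) \<and>
        endpoint (inv_lim f) (\<lambda>n. if even n then t else s)"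
    if st: "two_cycle f s t" and minimal: "\<forall>u v. two_cycle f u v \<and> {u, v} \<noteq> {s, t} \<longrightarrow> s < u" for s t
  proof -
    have least: "f (f x) \<noteq> x" if "0 \<le> x" "x < min s t" for x
      using no_period_two_point_below_least_two_cycle[OF cont _ unique st] minimal onto that
      by blast
    have "two_cycle f t s"
      using st unfolding two_cycle_def by auto
    then show ?thesis
      using endpoint_alternating_two_cycle[OF cont onto nosplit] st least
      by (metis min.commute)
  qed
  then show ?thesis
    using exists_two_cycle[OF cont onto unique] by blast
qed

end
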